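(* Let $\ell\ge1$ and $d\ge 2$ be integers. Then $\omega(\mathcal{B}(1,d))=d-1$ and $\omega(\mathcal{B}(2,d))=d^2-d$, and for $\ell\ge 3$, $$d^{\ell}-d^{\ell-1}\le \omega(\mathcal{B}(\ell,d))\le d^{\ell}-d^{\lfloor \ell/2\rfloor}-\left(\lfloor \ell/2\rfloor-1\right).$$
   Context: The BCube $\mathcal{B}(\ell,d)$ ($\ell,d$ positive integers) is the symmetric digraph defined as follows, with $\mathbb{Z}_d=\{0,1,\dots,d-1\}$. - Hosts: all vectors $\mathbf{h}=h_1\cdots h_\ell\in\mathbb{Z}_d^{\ell}$. - Switches: for each layer $k\in\{1,\dots,\ell\}$, one switch $\mathbf{s}^k$ for each vector $s^k_1\cdots s^k_{\ell-1}\in\mathbb{Z}_d^{\ell-1}$. Switches of different layers are distinct vertices. - Links: host $\mathbf{h}$ and layer-$k$ switch $\mathbf{s}^k$ are joined if and only if $s^k_1\cdots s^k_{\ell-1}=h_1\cdots h_{k-1}h_{k+1}\cdots h_\ell$. Each such link gives two arcs, an uplink (host $\to$ switch) and a downlink (switch $\to$ host). There are no other arcs. A host-to-host routing $R$ assigns to every ordered pair of distinct hosts a directed path from the first to the second in $\mathcal{B}(\ell,d)$. $\omega(\mathcal{B}(\ell,d),R)$ is the minimum number of colors (wavelengths) needed to color the paths of $R$ so that any two paths sharing an arc get different colors. The optical index is $\omega(\mathcal{B}(\ell,d))=\min_R\omega(\mathcal{B}(\ell,d),R)$, the minimum taken over all host-to-host routings $R$. *)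

theory Defs
  imports Main
begin

text \<open>Vertices of the BCube: hosts are vectors (lists) over Z_d, switches carry
  their layer k and a vector of length l-1.\<close>
datatype bvertex = Host "nat list" | Switch nat "nat list"

definition bc_hosts :: "nat \<Rightarrow> nat \<Rightarrow> nat list set" where
  "bc_hosts l d = {h. length h = l \<and> set h \<subseteq> {..<d}}"

definition bc_links :: "nat \<Rightarrow> nat \<Rightarrow> (bvertex \<times> bvertex) set" where
  "bc_links l d = {(Host h, Switch k (take (k - 1) h @ drop k h)) | h k.
                     h \<in> bc_hosts l d \<and> 1 \<le> k \<and> k \<le> l}"

definition bc_arcs :: "nat \<Rightarrow> nat \<Rightarrow> (bvertex \<times> bvertex) set" where
  "bc_arcs l d = bc_links l d \<union> (bc_links l d)\<inverse>"

definition is_dipath :: "('a \<times> 'a) set \<Rightarrow> 'a list \<Rightarrow> 'a \<Rightarrow> 'a \<Rightarrow> bool" where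
  "is_dipath A p x y \<longleftrightarrow> p \<noteq> [] \<and> hd p = x \<and> last p = y \<and> distinct p \<and>
     (\<forall>i. Suc i < length p \<longrightarrow> (p ! i, p ! Suc i) \<in> A)"

definition path_arcs :: "'a list \<Rightarrow> ('a \<times> 'a) set" where
  "path_arcs p = set (zip p (tl p))"

definition host_pairs :: "nat \<Rightarrow> nat \<Rightarrow> (nat list \<times> nat list) set" where
  "host_pairs l d = {(x, y). x \<in> bc_hosts l d \<and> y \<in> bc_hosts l d \<and> x \<noteq> y}"

definition is_routing :: "nat \<Rightarrow> nat \<Rightarrow> (nat list \<Rightarrow> nat list \<Rightarrow> bvertex list) \<Rightarrow> bool" where
  "is_routing l d R \<longleftrightarrow>
     (\<forall>(x, y) \<in> host_pairs l d. is_dipath (bc_arcs l d) (R x y) (Host x) (Host y))"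

definition colourable :: "nat \<Rightarrow> nat \<Rightarrow> (nat list \<Rightarrow> nat list \<Rightarrow> bvertex list) \<Rightarrow> nat \<Rightarrow> bool" where
  "colourable l d R k \<longleftrightarrow> (\<exists>c :: nat list \<times> nat list \<Rightarrow> nat.
     (\<forall>q \<in> host_pairs l d. c q < k) \<and>
     (\<forall>q \<in> host_pairs l d. \<forall>q' \<in> host_pairs l d. q \<noteq> q' \<longrightarrow>
        path_arcs (case_prod R q) \<inter> path_arcs (case_prod R q') \<noteq> {} \<longrightarrow> c q \<noteq> c q'))"

definition omega_routing :: "nat \<Rightarrow> nat \<Rightarrow> (nat list \<Rightarrow> nat list \<Rightarrow> bvertex list) \<Rightarrow> nat" where
  "omega_routing l d R = (LEAST k. colourable l d R k)"

definition optical_index :: "nat \<Rightarrow> nat \<Rightarrow> nat" where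
  "optical_index l d = (LEAST w. \<exists>R. is_routing l d R \<and> omega_routing l d R = w)"

end

theory Submission
  imports Defs
begin

text \<open>Lower bound: a path between hosts with different first coordinates must enter a host
  through a layer-1 switch, and there are only \<open>d\<^sup>l\<close> such downlinks; the \<open>d\<^sup>l (d\<^sup>l - d\<^sup>l\<^sup>-\<^sup>1)\<close>
  pairs of this kind therefore need \<open>d\<^sup>l - d\<^sup>l\<^sup>-\<^sup>1\<close> colours.

  Upper bound: route by correcting the coordinates in increasing order. The path from \<open>x\<close> to
  \<open>y\<close> then uses a layer \<open>j + 1\<close> exactly when coordinate \<open>j\<close> of the difference vector
  \<open>y - x (mod d)\<close> is nonzero, and an arc of that layer together with the difference vector
  determines the pair. So pairs may share a colour whenever their difference vectors are
  equal, or more generally have disjoint supports. With \<open>m = \<lfloor>l/2\<rfloor>\<close>, merging each vector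
  supported on coordinates \<open>[m, 2m)\<close> with its copy on \<open>[0, m)\<close>, and the vectors
  \<open>e\<^sub>i + e\<^sub>m\<^sub>+\<^sub>i\<close> (\<open>1 \<le> i < m\<close>) with \<open>e\<^sub>0 + e\<^sub>m\<close>, saves \<open>d\<^sup>m - 1 + m - 1\<close> of the
  \<open>d\<^sup>l - 1\<close> colours.\<close>

lemma mem_bc_hosts_iff: "h \<in> bc_hosts l d \<longleftrightarrow> length h = l \<and> (\<forall>p<l. h ! p < d)"
  unfolding bc_hosts_def by (auto simp: set_conv_nth)

lemma finite_bc_hosts: "finite (bc_hosts l d)"
  unfolding bc_hosts_def using finite_lists_length_eq[of "{..<d}" l] by (simp add: conj_commute)

lemma card_bc_hosts: "card (bc_hosts l d) = d ^ l"
  unfolding bc_hosts_def using card_lists_length_eq[of "{..<d}" l] by (simp add: conj_commute)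

lemma finite_host_pairs: "finite (host_pairs l d)"
proof (rule finite_subset)
  show "host_pairs l d \<subseteq> bc_hosts l d \<times> bc_hosts l d"
    unfolding host_pairs_def by auto
qed (simp add: finite_bc_hosts)

lemma bc_arcsE:
  assumes "a \<in> bc_arcs l d"
  obtains (up) h k where "a = (Host h, Switch k (take (k - 1) h @ drop k h))"
      "h \<in> bc_hosts l d" "1 \<le> k" "k \<le> l"
    | (down) h k where "a = (Switch k (take (k - 1) h @ drop k h), Host h)"
      "h \<in> bc_hosts l d" "1 \<le> k" "k \<le> l"
  using assms unfolding bc_arcs_def bc_links_def by blast

lemma uplink_in_bc_arcs:
  "h \<in> bc_hosts l d \<Longrightarrow> 1 \<le> k \<Longrightarrow> k \<le> l \<Longrightarrow> s = take (k - 1) h @ drop k h \<Longrightarrow>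
    (Host h, Switch k s) \<in> bc_arcs l d"
  unfolding bc_arcs_def bc_links_def by auto

lemma downlink_in_bc_arcs:
  "h \<in> bc_hosts l d \<Longrightarrow> 1 \<le> k \<Longrightarrow> k \<le> l \<Longrightarrow> s = take (k - 1) h @ drop k h \<Longrightarrow>
    (Switch k s, Host h) \<in> bc_arcs l d"
  unfolding bc_arcs_def bc_links_def by auto

lemma nth_in_path_arcs: "Suc i < length p \<Longrightarrow> (p ! i, p ! Suc i) \<in> path_arcs p"
  unfolding path_arcs_def by (auto simp: in_set_conv_nth nth_tl intro!: exI[of _ i])

lemma path_arcs_singleton: "path_arcs [a] = {}"
  by (simp add: path_arcs_def)

lemma path_arcs_Cons: "r \<noteq> [] \<Longrightarrow> path_arcs (a # r) = insert (a, hd r) (path_arcs r)"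
  by (cases r) (auto simp: path_arcs_def)

lemma is_dipathI:
  assumes "p \<noteq> []" "hd p = x" "last p = y" "distinct p" "path_arcs p \<subseteq> A"
  shows "is_dipath A p x y"
  unfolding is_dipath_def using assms nth_in_path_arcs by blast

lemma colourable_card_host_pairs: "colourable l d R (card (host_pairs l d))"
proof -
  obtain N where "bij_betw N (host_pairs l d) {0..<card (host_pairs l d)}"
    using ex_bij_betw_finite_nat[OF finite_host_pairs] by blast
  then show ?thesis
    unfolding colourable_def by (intro exI[of _ N]) (auto simp: bij_betw_def inj_on_def)
qed

lemma colourable_mono: "colourable l d R k \<Longrightarrow> k \<le> k' \<Longrightarrow> colourable l d R k'"
  unfolding colourable_def using order_less_le_trans by blast

lemma colourable_omega_routing: "colourable l d R (omega_routing l d R)"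
  unfolding omega_routing_def by (rule LeastI[of "colourable l d R", OF colourable_card_host_pairs])

lemma optical_index_le_colourable:
  assumes "is_routing l d R" "colourable l d R k"
  shows "optical_index l d \<le> k"
proof -
  have "optical_index l d \<le> omega_routing l d R"
    unfolding optical_index_def by (rule Least_le) (use assms(1) in blast)
  also have "\<dots> \<le> k"
    unfolding omega_routing_def by (rule Least_le) (rule assms(2))
  finally show ?thesis .
qed

lemma le_optical_index:
  assumes "is_routing l d R\<^sub>0"
    and "\<And>R k. is_routing l d R \<Longrightarrow> colourable l d R k \<Longrightarrow> B \<le> k"
  shows "B \<le> optical_index l d"
proof -
  have "\<exists>R. is_routing l d R \<and> omega_routing l d R = optical_index l d"
    unfolding optical_index_def by (rule LeastI_ex) (use assms(1) in blast)
  then show ?thesis using assms(2) colourable_omega_routing by metis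
qed

text \<open>Pigeonhole: paths of one colour are arc-disjoint, so each colour class of \<open>P\<close>
  has at most \<open>card D\<close> members.\<close>
lemma colourable_card_le:
  assumes "colourable l d R k" "P \<subseteq> host_pairs l d" "finite D"
    and meets: "\<And>q. q \<in> P \<Longrightarrow> path_arcs (case_prod R q) \<inter> D \<noteq> {}"
  shows "card P \<le> k * card D"
proof -
  obtain c where c_lt: "\<forall>q \<in> host_pairs l d. c q < k"
    and c_proper: "\<forall>q \<in> host_pairs l d. \<forall>q' \<in> host_pairs l d. q \<noteq> q' \<longrightarrow>
        path_arcs (case_prod R q) \<inter> path_arcs (case_prod R q') \<noteq> {} \<longrightarrow> c q \<noteq> c q'"
    using assms(1) unfolding colourable_def by blast
  define a where "a q = (SOME e. e \<in> path_arcs (case_prod R q) \<inter> D)" for q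
  have a: "a q \<in> path_arcs (case_prod R q) \<inter> D" if "q \<in> P" for q
    unfolding a_def by (rule someI_ex) (use meets[OF that] in blast)
  have "inj_on (\<lambda>q. (c q, a q)) P"
  proof (rule inj_onI)
    fix q q' assume q: "q \<in> P" and q': "q' \<in> P" and eq: "(c q, a q) = (c q', a q')"
    then have "path_arcs (case_prod R q) \<inter> path_arcs (case_prod R q') \<noteq> {}"
      using a[OF q] a[OF q'] by auto
    then show "q = q'" using c_proper q q' eq assms(2) by blast
  qed
  moreover have "(\<lambda>q. (c q, a q)) ` P \<subseteq> {..<k} \<times> D"
    using a c_lt assms(2) by auto
  ultimately have "card P \<le> card ({..<k} \<times> D)"
    using card_inj_on_le assms(3) by blast
  then show ?thesis by (simp add: card_cartesian_product)
qed

definition first_coord :: "bvertex \<Rightarrow> nat" where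
  "first_coord v = (case v of Host h \<Rightarrow> h ! 0 | Switch k s \<Rightarrow> s ! 0)"

lemma first_coord_arc_eq:
  assumes "(u, w) \<in> bc_arcs l d" "\<forall>s. u \<noteq> Switch 1 s" "\<forall>s. w \<noteq> Switch 1 s"
  shows "first_coord u = first_coord w"
proof -
  have keep_first: "(take (k - 1) h @ drop k h) ! 0 = h ! 0"
    if "h \<in> bc_hosts l d" "1 \<le> k" "k \<le> l" "k \<noteq> 1" for h k
    using that by (simp add: nth_append mem_bc_hosts_iff)
  from assms(1) show ?thesis
  proof (cases rule: bc_arcsE)
    case (up h k)
    moreover have "k \<noteq> 1" using up(1) assms(3) by auto
    ultimately show ?thesis using keep_first[of h k] unfolding first_coord_def by simp
  next
    case (down h k)
    moreover have "k \<noteq> 1" using down(1) assms(2) by auto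
    ultimately show ?thesis using keep_first[of h k] unfolding first_coord_def by simp
  qed
qed

definition layer1_downlinks :: "nat \<Rightarrow> nat \<Rightarrow> (bvertex \<times> bvertex) set" where
  "layer1_downlinks l d = (\<lambda>h. (Switch 1 (drop 1 h), Host h)) ` bc_hosts l d"

lemma dipath_meets_layer1_downlinks:
  assumes p: "is_dipath (bc_arcs l d) p (Host x) (Host y)" and ne: "x ! 0 \<noteq> y ! 0"
  shows "path_arcs p \<inter> layer1_downlinks l d \<noteq> {}"
proof
  assume avoid: "path_arcs p \<inter> layer1_downlinks l d = {}"
  from p have p_ne: "p \<noteq> []" and hd: "hd p = Host x" and last: "last p = Host y"
    and arcs: "\<And>i. Suc i < length p \<Longrightarrow> (p ! i, p ! Suc i) \<in> bc_arcs l d"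
    unfolding is_dipath_def by auto
  have no_layer1: "\<forall>s. p ! j \<noteq> Switch 1 s" if j: "j < length p" for j
  proof (intro allI notI)
    fix s assume s: "p ! j = Switch 1 s"
    have "j \<noteq> length p - 1" using s last p_ne by (auto simp: last_conv_nth)
    then have j1: "Suc j < length p" using j by auto
    from arcs[OF j1] show False
    proof (cases rule: bc_arcsE)
      case (down h k)
      then have "(p ! j, p ! Suc j) \<in> layer1_downlinks l d"
        using s by (auto simp: layer1_downlinks_def)
      then show False using avoid nth_in_path_arcs[OF j1] by blast
    qed (use s in simp)
  qed
  have "first_coord (p ! i) = first_coord (p ! 0)" if "i < length p" for i
    using that
  proof (induction i)
    case (Suc i)
    then show ?case
      using first_coord_arc_eq[OF arcs no_layer1 no_layer1] by simp
  qed simp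
  from this[of "length p - 1"] show False
    using p_ne hd last ne by (simp add: last_conv_nth hd_conv_nth first_coord_def)
qed

lemma card_first_coord_neq:
  assumes "l \<ge> 1" "c < d"
  shows "card {y \<in> bc_hosts l d. y ! 0 \<noteq> c} = d ^ l - d ^ (l - 1)"
proof -
  have eq: "{y \<in> bc_hosts l d. y ! 0 = c} = (\<lambda>t. c # t) ` bc_hosts (l - 1) d"
  proof (intro equalityI subsetI)
    fix y assume y: "y \<in> {y \<in> bc_hosts l d. y ! 0 = c}"
    then obtain t where "y = c # t" using assms(1)
      by (cases y) (auto simp: mem_bc_hosts_iff)
    then show "y \<in> (\<lambda>t. c # t) ` bc_hosts (l - 1) d" using y by (auto simp: bc_hosts_def)
  qed (use assms in \<open>auto simp: bc_hosts_def\<close>)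
  have "card {y \<in> bc_hosts l d. y ! 0 \<noteq> c}
      = card (bc_hosts l d) - card {y \<in> bc_hosts l d. y ! 0 = c}"
    by (subst card_Diff_subset[symmetric]) (auto simp: finite_bc_hosts intro: arg_cong[of _ _ card])
  also have "\<dots> = d ^ l - d ^ (l - 1)"
    unfolding eq by (subst card_image) (auto simp: card_bc_hosts)
  finally show ?thesis .
qed

lemma colourable_lower_bound:
  assumes l: "l \<ge> 1" and R: "is_routing l d R" and k: "colourable l d R k"
  shows "d ^ l - d ^ (l - 1) \<le> k"
proof -
  define P where "P = Sigma (bc_hosts l d) (\<lambda>x. {y \<in> bc_hosts l d. y ! 0 \<noteq> x ! 0})"
  have "card P = (\<Sum>x \<in> bc_hosts l d. card {y \<in> bc_hosts l d. y ! 0 \<noteq> x ! 0})"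
    unfolding P_def by (rule card_SigmaI) (auto simp: finite_bc_hosts)
  also have "\<dots> = (\<Sum>x \<in> bc_hosts l d. d ^ l - d ^ (l - 1))"
    using l by (intro sum.cong refl card_first_coord_neq) (auto simp: mem_bc_hosts_iff)
  finally have card_P: "card P = d ^ l * (d ^ l - d ^ (l - 1))"
    by (simp add: card_bc_hosts)
  have "P \<subseteq> host_pairs l d" unfolding P_def host_pairs_def by auto
  moreover have "path_arcs (case_prod R q) \<inter> layer1_downlinks l d \<noteq> {}" if "q \<in> P" for q
  proof -
    obtain x y where q: "q = (x, y)" by (cases q)
    then have "x \<in> bc_hosts l d" "y \<in> bc_hosts l d" "x ! 0 \<noteq> y ! 0"
      using that unfolding P_def by auto
    then have "is_dipath (bc_arcs l d) (R x y) (Host x) (Host y)"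
      using R unfolding is_routing_def host_pairs_def by auto
    then show ?thesis
      using dipath_meets_layer1_downlinks \<open>x ! 0 \<noteq> y ! 0\<close> unfolding q by simp
  qed
  ultimately have "card P \<le> k * card (layer1_downlinks l d)"
    using colourable_card_le[OF k] by (simp add: layer1_downlinks_def finite_bc_hosts)
  also have "card (layer1_downlinks l d) \<le> d ^ l"
    unfolding layer1_downlinks_def using card_image_le[OF finite_bc_hosts] card_bc_hosts by metis
  then have "k * card (layer1_downlinks l d) \<le> d ^ l * k" by simp
  finally show ?thesis using card_P l by (cases "d = 0") (simp_all add: power_0_left)
qed

definition mid_host :: "nat list \<Rightarrow> nat list \<Rightarrow> nat \<Rightarrow> nat list" where
  "mid_host x y j = take j y @ drop j x"

definition mid_switch :: "nat list \<Rightarrow> nat list \<Rightarrow> nat \<Rightarrow> nat list" where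
  "mid_switch x y j = take j y @ drop (Suc j) x"

fun dim_order_path :: "nat list \<Rightarrow> nat list \<Rightarrow> nat \<Rightarrow> nat \<Rightarrow> bvertex list" where
  "dim_order_path x y i 0 = [Host (mid_host x y i)]"
| "dim_order_path x y i (Suc n) =
    (if x ! i = y ! i then dim_order_path x y (Suc i) n
     else Host (mid_host x y i) # Switch (Suc i) (mid_switch x y i) # dim_order_path x y (Suc i) n)"

definition dim_order_routing :: "nat list \<Rightarrow> nat list \<Rightarrow> bvertex list" where
  "dim_order_routing x y = dim_order_path x y 0 (length x)"

definition layer_arcs :: "nat list \<Rightarrow> nat list \<Rightarrow> nat \<Rightarrow> (bvertex \<times> bvertex) set" where
  "layer_arcs x y j =
    {(Host (mid_host x y j), Switch (Suc j) (mid_switch x y j)),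
     (Switch (Suc j) (mid_switch x y j), Host (mid_host x y (Suc j)))}"

lemma length_mid_host: "length x = l \<Longrightarrow> length y = l \<Longrightarrow> j \<le> l \<Longrightarrow> length (mid_host x y j) = l"
  by (simp add: mid_host_def)

lemma nth_mid_host:
  "length x = l \<Longrightarrow> length y = l \<Longrightarrow> j \<le> l \<Longrightarrow> p < l \<Longrightarrow>
    mid_host x y j ! p = (if p < j then y ! p else x ! p)"
  by (auto simp: mid_host_def nth_append min_def)

lemma nth_mid_switch:
  "length x = l \<Longrightarrow> length y = l \<Longrightarrow> j < l \<Longrightarrow> p < l - 1 \<Longrightarrow>
    mid_switch x y j ! p = (if p < j then y ! p else x ! Suc p)"
  by (auto simp: mid_switch_def nth_append min_def)

lemma mid_host_0 [simp]: "mid_host x y 0 = x"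
  by (simp add: mid_host_def)

lemma mid_host_length: "length x = l \<Longrightarrow> length y = l \<Longrightarrow> mid_host x y l = y"
  by (simp add: mid_host_def)

lemma mid_host_Suc:
  assumes "length x = l" "length y = l" "i < l" "x ! i = y ! i"
  shows "mid_host x y (Suc i) = mid_host x y i"
  using assms by (intro nth_equalityI) (auto simp: length_mid_host nth_mid_host less_Suc_eq)

lemma mid_host_in_bc_hosts:
  assumes "x \<in> bc_hosts l d" "y \<in> bc_hosts l d" "j \<le> l"
  shows "mid_host x y j \<in> bc_hosts l d"
  using assms by (auto simp: mem_bc_hosts_iff length_mid_host nth_mid_host)

lemma layer_arcs_subset_bc_arcs:
  assumes x: "x \<in> bc_hosts l d" and y: "y \<in> bc_hosts l d" and j: "j < l"
  shows "layer_arcs x y j \<subseteq> bc_arcs l d"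
proof -
  have lx: "length x = l" and ly: "length y = l" using x y by (auto simp: bc_hosts_def)
  have "(Host (mid_host x y j), Switch (Suc j) (mid_switch x y j)) \<in> bc_arcs l d"
    using j lx ly
    by (intro uplink_in_bc_arcs mid_host_in_bc_hosts x y) (simp_all add: mid_switch_def mid_host_def)
  moreover have "(Switch (Suc j) (mid_switch x y j), Host (mid_host x y (Suc j))) \<in> bc_arcs l d"
    using j lx ly
    by (intro downlink_in_bc_arcs mid_host_in_bc_hosts x y)
      (simp_all add: mid_switch_def mid_host_def min_def take_Suc_conv_app_nth)
  ultimately show ?thesis unfolding layer_arcs_def by simp
qed

lemma dim_order_path_not_Nil: "dim_order_path x y i n \<noteq> []"
  by (induction n arbitrary: i) auto

lemma hd_dim_order_path:
  "length x = l \<Longrightarrow> length y = l \<Longrightarrow> i + n \<le> l \<Longrightarrow>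
    hd (dim_order_path x y i n) = Host (mid_host x y i)"
  by (induction n arbitrary: i) (auto simp: mid_host_Suc)

lemma last_dim_order_path: "last (dim_order_path x y i n) = Host (mid_host x y (i + n))"
  by (induction n arbitrary: i) (auto simp: dim_order_path_not_Nil)

lemma Host_in_dim_order_path:
  "Host h \<in> set (dim_order_path x y i n) \<Longrightarrow> \<exists>j. i \<le> j \<and> j \<le> i + n \<and> h = mid_host x y j"
proof (induction n arbitrary: i)
  case (Suc n)
  show ?case
  proof (cases "Host h \<in> set (dim_order_path x y (Suc i) n)")
    case True
    then obtain j where "Suc i \<le> j" "j \<le> Suc i + n" "h = mid_host x y j" using Suc.IH by blast
    then show ?thesis by (intro exI[of _ j]) simp
  next
    case False
    then have "h = mid_host x y i" using Suc.prems by (auto split: if_splits)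
    then show ?thesis by (intro exI[of _ i]) simp
  qed
qed (auto intro: exI[of _ i])

lemma Switch_in_dim_order_path: "Switch k s \<in> set (dim_order_path x y i n) \<Longrightarrow> i < k"
proof (induction n arbitrary: i)
  case (Suc n)
  then have "Switch k s \<in> set (dim_order_path x y (Suc i) n) \<or> k = Suc i"
    by (auto split: if_splits)
  then show ?case using Suc.IH[of "Suc i"] by auto
qed simp

lemma distinct_dim_order_path:
  assumes "length x = l" "length y = l" "i + n \<le> l"
  shows "distinct (dim_order_path x y i n)"
  using assms
proof (induction n arbitrary: i)
  case (Suc n)
  have "Host (mid_host x y i) \<notin> set (dim_order_path x y (Suc i) n)" if "x ! i \<noteq> y ! i"
  proof
    assume "Host (mid_host x y i) \<in> set (dim_order_path x y (Suc i) n)"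
    then obtain j where "Suc i \<le> j" "j \<le> Suc i + n" "mid_host x y i = mid_host x y j"
      by (auto dest: Host_in_dim_order_path)
    then have "mid_host x y i ! i = mid_host x y j ! i" by simp
    then show False using that Suc.prems \<open>Suc i \<le> j\<close> \<open>j \<le> Suc i + n\<close> by (simp add: nth_mid_host)
  qed
  then show ?case
    using Suc by (auto dest: Switch_in_dim_order_path)
qed simp

lemma path_arcs_dim_order_path:
  assumes "length x = l" "length y = l" "i + n \<le> l"
    and "a \<in> path_arcs (dim_order_path x y i n)"
  shows "\<exists>j. i \<le> j \<and> j < i + n \<and> x ! j \<noteq> y ! j \<and> a \<in> layer_arcs x y j"
  using assms
proof (induction n arbitrary: i)
  case 0
  then show ?case by (simp add: path_arcs_singleton)
next
  case (Suc n)
  have "a \<in> layer_arcs x y i \<and> x ! i \<noteq> y ! i \<or> a \<in> path_arcs (dim_order_path x y (Suc i) n)"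
    using Suc.prems hd_dim_order_path[of x l y "Suc i" n]
    by (auto simp: path_arcs_Cons dim_order_path_not_Nil layer_arcs_def split: if_splits)
  then show ?case
    using Suc.IH[of "Suc i"] Suc.prems by (auto intro: Suc_leD)
qed

lemma path_arcs_dim_order_routing:
  assumes "length x = l" "length y = l" "a \<in> path_arcs (dim_order_routing x y)"
  shows "\<exists>j<l. x ! j \<noteq> y ! j \<and> a \<in> layer_arcs x y j"
  using path_arcs_dim_order_path[of x l y 0 l a] assms by (simp add: dim_order_routing_def)

lemma is_routing_dim_order_routing: "is_routing l d dim_order_routing"
  unfolding is_routing_def
proof (intro ballI, clarify)
  fix x y assume "(x, y) \<in> host_pairs l d"
  then have x: "x \<in> bc_hosts l d" and y: "y \<in> bc_hosts l d" unfolding host_pairs_def by auto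
  then have lx: "length x = l" and ly: "length y = l" by (auto simp: bc_hosts_def)
  show "is_dipath (bc_arcs l d) (dim_order_routing x y) (Host x) (Host y)"
  proof (rule is_dipathI)
    show "path_arcs (dim_order_routing x y) \<subseteq> bc_arcs l d"
      using path_arcs_dim_order_routing[OF lx ly] layer_arcs_subset_bc_arcs[OF x y] by blast
  qed (use lx ly in \<open>simp_all add: dim_order_routing_def dim_order_path_not_Nil hd_dim_order_path
      last_dim_order_path mid_host_length distinct_dim_order_path\<close>)
qed

definition support :: "nat list \<Rightarrow> nat set" where
  "support v = {p. p < length v \<and> v ! p \<noteq> 0}"

definition diff_vec :: "nat \<Rightarrow> nat list \<Rightarrow> nat list \<Rightarrow> nat list" where
  "diff_vec d x y = map (\<lambda>p. (y ! p + d - x ! p) mod d) [0..<length x]"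

lemma mod_add_diff_cases:
  fixes a b d :: nat
  assumes "a < d" "b < d"
  shows "(b + d - a) mod d = (if a \<le> b then b - a else b + d - a)"
proof (cases "a \<le> b")
  case True
  then have "b + d - a = (b - a) + d" by arith
  then have "(b + d - a) mod d = (b - a) mod d" by simp
  then show ?thesis using True assms by simp
qed (use assms in simp)

lemma mod_add_diff_eq_0_iff:
  fixes a b d :: nat
  shows "a < d \<Longrightarrow> b < d \<Longrightarrow> (b + d - a) mod d = 0 \<longleftrightarrow> a = b"
  by (simp add: mod_add_diff_cases; arith)

lemma mod_add_diff_cancel:
  fixes a b a' b' d :: nat
  shows "a < d \<Longrightarrow> b < d \<Longrightarrow> a' < d \<Longrightarrow> b' < d \<Longrightarrow>
    (b + d - a) mod d = (b' + d - a') mod d \<Longrightarrow> a = a' \<longleftrightarrow> b = b'"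
  by (simp add: mod_add_diff_cases split: if_splits; arith)

lemma length_diff_vec [simp]: "length (diff_vec d x y) = length x"
  by (simp add: diff_vec_def)

lemma nth_diff_vec: "p < length x \<Longrightarrow> diff_vec d x y ! p = (y ! p + d - x ! p) mod d"
  by (simp add: diff_vec_def)

lemma support_diff_vec:
  assumes "x \<in> bc_hosts l d" "y \<in> bc_hosts l d"
  shows "support (diff_vec d x y) = {p. p < l \<and> x ! p \<noteq> y ! p}"
proof -
  have "diff_vec d x y ! p = 0 \<longleftrightarrow> x ! p = y ! p" if "p < l" for p
    using assms that by (simp add: nth_diff_vec mem_bc_hosts_iff mod_add_diff_eq_0_iff)
  then show ?thesis
    using assms(1) unfolding support_def by (auto simp: mem_bc_hosts_iff) (metis less_irrefl)
qed

lemma diff_vec_in_bc_hosts: "x \<in> bc_hosts l d \<Longrightarrow> 0 < d \<Longrightarrow> diff_vec d x y \<in> bc_hosts l d"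
  by (simp add: mem_bc_hosts_iff nth_diff_vec)

lemma layer_arcs_meet_imp_coord_eq:
  assumes len: "length x = l" "length y = l" "length x' = l" "length y' = l"
    and j: "j < l" and meet: "layer_arcs x y j \<inter> layer_arcs x' y' j \<noteq> {}" and p: "p < l"
  shows "x ! p = x' ! p \<or> y ! p = y' ! p"
proof -
  have switch: "mid_switch x y j = mid_switch x' y' j"
    and host: "mid_host x y j = mid_host x' y' j \<or> mid_host x y (Suc j) = mid_host x' y' (Suc j)"
    using meet unfolding layer_arcs_def by auto
  consider "p < j" | "p = j" | "j < p" by arith
  then show ?thesis
  proof cases
    case 1
    then have "mid_switch x y j ! p = mid_switch x' y' j ! p" using switch by simp
    then show ?thesis using 1 j len by (simp add: nth_mid_switch)
  next
    case 2
    from host show ?thesis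
    proof
      assume "mid_host x y j = mid_host x' y' j"
      then have "mid_host x y j ! p = mid_host x' y' j ! p" by simp
      then show ?thesis using 2 j len by (simp add: nth_mid_host)
    next
      assume "mid_host x y (Suc j) = mid_host x' y' (Suc j)"
      then have "mid_host x y (Suc j) ! p = mid_host x' y' (Suc j) ! p" by simp
      then show ?thesis using 2 j len by (simp add: nth_mid_host)
    qed
  next
    case 3
    then have "Suc (p - 1) = p" "\<not> p - 1 < j" by arith+
    moreover have "mid_switch x y j ! (p - 1) = mid_switch x' y' j ! (p - 1)" using switch by simp
    ultimately show ?thesis using p j len by (simp add: nth_mid_switch)
  qed
qed

text \<open>The difference vector recovers in each coordinate the endpoint not fixed by the shared arc.\<close>
lemma eq_if_diff_vec_eq_and_layer_arcs_meet:
  assumes x: "x \<in> bc_hosts l d" and y: "y \<in> bc_hosts l d"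
    and x': "x' \<in> bc_hosts l d" and y': "y' \<in> bc_hosts l d" and j: "j < l"
    and diff: "diff_vec d x y = diff_vec d x' y'"
    and meet: "layer_arcs x y j \<inter> layer_arcs x' y' j \<noteq> {}"
  shows "x = x' \<and> y = y'"
proof -
  have len: "length x = l" "length y = l" "length x' = l" "length y' = l"
    using x y x' y' by (auto simp: mem_bc_hosts_iff)
  have "x ! p = x' ! p \<and> y ! p = y' ! p" if p: "p < l" for p
  proof -
    have "x ! p < d" "y ! p < d" "x' ! p < d" "y' ! p < d"
      using p x y x' y' by (auto simp: mem_bc_hosts_iff)
    moreover have "(y ! p + d - x ! p) mod d = (y' ! p + d - x' ! p) mod d"
      using arg_cong[OF diff, of "\<lambda>v. v ! p"] p len by (simp add: nth_diff_vec)
    ultimately show ?thesis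
      using mod_add_diff_cancel layer_arcs_meet_imp_coord_eq[OF len j meet p] by blast
  qed
  then show ?thesis using len by (auto intro: nth_equalityI)
qed

lemma diff_vec_nonzero:
  assumes "(x, y) \<in> host_pairs l d"
  shows "diff_vec d x y \<in> {v \<in> bc_hosts l d. support v \<noteq> {}}"
proof -
  have x: "x \<in> bc_hosts l d" and y: "y \<in> bc_hosts l d" and "x \<noteq> y"
    using assms unfolding host_pairs_def by auto
  then obtain p where p: "p < l" "x ! p \<noteq> y ! p"
    by (metis mem_bc_hosts_iff nth_equalityI)
  then have "0 < d" using x by (auto simp: mem_bc_hosts_iff)
  then show ?thesis using x y p by (auto simp: diff_vec_in_bc_hosts support_diff_vec)
qed

lemma shared_arc_dim_order_routing:
  assumes hosts: "x \<in> bc_hosts l d" "y \<in> bc_hosts l d" "x' \<in> bc_hosts l d" "y' \<in> bc_hosts l d"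
    and shared: "path_arcs (dim_order_routing x y) \<inter> path_arcs (dim_order_routing x' y') \<noteq> {}"
  obtains j where "j < l" "j \<in> support (diff_vec d x y)" "j \<in> support (diff_vec d x' y')"
    "layer_arcs x y j \<inter> layer_arcs x' y' j \<noteq> {}"
proof -
  have len: "length x = l" "length y = l" "length x' = l" "length y' = l"
    using hosts by (auto simp: mem_bc_hosts_iff)
  obtain a where "a \<in> path_arcs (dim_order_routing x y)" "a \<in> path_arcs (dim_order_routing x' y')"
    using shared by auto
  then obtain j j' where j: "j < l" "x ! j \<noteq> y ! j" "a \<in> layer_arcs x y j"
    and j': "x' ! j' \<noteq> y' ! j'" "a \<in> layer_arcs x' y' j'"
    using path_arcs_dim_order_routing len by metis
  moreover have "j' = j" using j(3) j'(2) unfolding layer_arcs_def by auto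
  ultimately show ?thesis using that hosts by (auto simp: support_diff_vec)
qed

lemma colourable_dim_order_routing:
  fixes l d :: nat and f :: "nat list \<Rightarrow> 'a"
  defines "V \<equiv> {v \<in> bc_hosts l d. support v \<noteq> {}}"
  assumes f: "\<And>v w. v \<in> V \<Longrightarrow> w \<in> V \<Longrightarrow> f v = f w \<Longrightarrow> support v \<inter> support w \<noteq> {} \<Longrightarrow> v = w"
  shows "colourable l d dim_order_routing (card (f ` V))"
proof -
  have "finite V" unfolding V_def using finite_bc_hosts by simp
  then obtain N where N: "bij_betw N (f ` V) {0..<card (f ` V)}"
    using ex_bij_betw_finite_nat by blast
  have diff_V: "diff_vec d x y \<in> V" if "(x, y) \<in> host_pairs l d" for x y
    using diff_vec_nonzero[OF that] unfolding V_def .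
  define c where "c q = N (f (case_prod (diff_vec d) q))" for q
  show ?thesis unfolding colourable_def
  proof (intro exI[of _ c] conjI ballI impI)
    fix q assume "q \<in> host_pairs l d"
    then show "c q < card (f ` V)"
      using N diff_V unfolding c_def bij_betw_def by (cases q) auto
  next
    fix q q' assume q: "q \<in> host_pairs l d" and q': "q' \<in> host_pairs l d" and "q \<noteq> q'"
      and shared: "path_arcs (case_prod dim_order_routing q) \<inter> path_arcs (case_prod dim_order_routing q') \<noteq> {}"
    obtain x y x' y' where qs: "q = (x, y)" "q' = (x', y')" by (cases q, cases q')
    have hosts: "x \<in> bc_hosts l d" "y \<in> bc_hosts l d" "x' \<in> bc_hosts l d" "y' \<in> bc_hosts l d"
      using q q' qs unfolding host_pairs_def by auto
    obtain j where j: "j < l" "j \<in> support (diff_vec d x y)" "j \<in> support (diff_vec d x' y')"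
      and meet: "layer_arcs x y j \<inter> layer_arcs x' y' j \<noteq> {}"
      using shared_arc_dim_order_routing[OF hosts] shared qs by auto
    show "c q \<noteq> c q'"
    proof
      assume "c q = c q'"
      then have "f (diff_vec d x y) = f (diff_vec d x' y')"
        using N diff_V q q' qs unfolding c_def bij_betw_def inj_on_def by auto
      then have "diff_vec d x y = diff_vec d x' y'"
        using f diff_V q q' qs j by blast
      then show False
        using eq_if_diff_vec_eq_and_layer_arcs_meet[OF hosts j(1) _ meet] \<open>q \<noteq> q'\<close> qs by simp
    qed
  qed
qed

lemma support_eq_empty_iff: "support v = {} \<longleftrightarrow> v = replicate (length v) 0"
  by (auto simp: support_def list_eq_iff_nth_eq)

lemma card_nonzero_vecs:
  assumes "0 < d"
  shows "card {v \<in> bc_hosts l d. support v \<noteq> {}} = d ^ l - 1"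
proof -
  have "{v \<in> bc_hosts l d. support v \<noteq> {}} = bc_hosts l d - {replicate l 0}"
    by (auto simp: support_eq_empty_iff mem_bc_hosts_iff)
  moreover have "replicate l 0 \<in> bc_hosts l d" using assms by (simp add: mem_bc_hosts_iff)
  ultimately show ?thesis by (simp add: card_bc_hosts finite_bc_hosts)
qed

definition middle_block :: "nat \<Rightarrow> nat list \<Rightarrow> bool" where
  "middle_block m v \<longleftrightarrow> support v \<noteq> {} \<and> support v \<subseteq> {m..<2 * m}"

definition shift_down :: "nat \<Rightarrow> nat list \<Rightarrow> nat list" where
  "shift_down m v = map (\<lambda>p. if p < m then v ! (m + p) else 0) [0..<length v]"

definition shift_up :: "nat \<Rightarrow> nat \<Rightarrow> nat list \<Rightarrow> nat list" where
  "shift_up m l a = map (\<lambda>p. if m \<le> p \<and> p < 2 * m then a ! (p - m) else 0) [0..<l]"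

definition twin :: "nat \<Rightarrow> nat \<Rightarrow> nat \<Rightarrow> nat list" where
  "twin m l i = map (\<lambda>p. if p = i \<or> p = m + i then 1 else 0) [0..<l]"

definition is_twin :: "nat \<Rightarrow> nat \<Rightarrow> nat list \<Rightarrow> bool" where
  "is_twin m l v \<longleftrightarrow> (\<exists>i \<in> {1..<m}. v = twin m l i)"

definition merge_class :: "nat \<Rightarrow> nat \<Rightarrow> nat list \<Rightarrow> nat list" where
  "merge_class m l v =
    (if middle_block m v then shift_down m v else if is_twin m l v then twin m l 0 else v)"

lemma length_shift_down [simp]: "length (shift_down m v) = length v"
  by (simp add: shift_down_def)

lemma nth_shift_down: "p < length v \<Longrightarrow> shift_down m v ! p = (if p < m then v ! (m + p) else 0)"
  by (simp add: shift_down_def)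

lemma length_shift_up [simp]: "length (shift_up m l a) = l"
  by (simp add: shift_up_def)

lemma nth_shift_up: "p < l \<Longrightarrow> shift_up m l a ! p = (if m \<le> p \<and> p < 2 * m then a ! (p - m) else 0)"
  by (simp add: shift_up_def)

lemma length_twin [simp]: "length (twin m l i) = l"
  by (simp add: twin_def)

lemma nth_twin: "p < l \<Longrightarrow> twin m l i ! p = (if p = i \<or> p = m + i then 1 else 0)"
  by (simp add: twin_def)

lemma support_shift_down:
  "2 * m \<le> length v \<Longrightarrow> support (shift_down m v) = {p. p < m \<and> m + p \<in> support v}"
  by (auto simp: support_def nth_shift_down split: if_splits)

lemma support_shift_up:
  assumes "2 * m \<le> l" "length a = m"
  shows "support (shift_up m l a) = (\<lambda>p. m + p) ` support a"
proof (intro equalityI subsetI)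
  fix p assume "p \<in> support (shift_up m l a)"
  then have "m \<le> p" "p < 2 * m" "a ! (p - m) \<noteq> 0"
    by (auto simp: support_def nth_shift_up split: if_splits)
  then show "p \<in> (\<lambda>p. m + p) ` support a"
    using assms by (auto simp: support_def image_iff intro!: exI[of _ "p - m"])
qed (use assms in \<open>auto simp: support_def nth_shift_up\<close>)

lemma support_twin: "i < m \<Longrightarrow> 2 * m \<le> l \<Longrightarrow> support (twin m l i) = {i, m + i}"
  by (auto simp: support_def nth_twin split: if_splits)

lemma twin_in_bc_hosts: "1 < d \<Longrightarrow> twin m l i \<in> bc_hosts l d"
  by (simp add: mem_bc_hosts_iff nth_twin)

lemma shift_down_inj:
  assumes "2 * m \<le> length v" "length w = length v" "middle_block m v" "middle_block m w"
    and "shift_down m v = shift_down m w"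
  shows "v = w"
proof (rule nth_equalityI)
  fix p assume p: "p < length v"
  show "v ! p = w ! p"
  proof (cases "m \<le> p \<and> p < 2 * m")
    case True
    then have "shift_down m v ! (p - m) = shift_down m w ! (p - m)" using assms(5) by simp
    moreover have "p - m < length v" "p - m < m" "m + (p - m) = p" using True assms(1) by auto
    ultimately show ?thesis using assms(2) by (simp add: nth_shift_down)
  next
    case False
    then have "p \<notin> support v" "p \<notin> support w"
      using assms(3,4) unfolding middle_block_def by auto
    then show ?thesis using p assms(2) by (simp add: support_def)
  qed
qed (use assms in simp)

lemma merge_class_eq_imp_eq_middle:
  assumes ml: "2 * m \<le> l" and len: "length v = l" "length w = l" and v: "middle_block m v"
    and eq: "merge_class m l v = merge_class m l w" and meet: "support v \<inter> support w \<noteq> {}"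
  shows "v = w"
proof -
  have low: "support (shift_down m v) \<subseteq> {..<m}"
    using support_shift_down ml len by auto
  have merge_v: "merge_class m l v = shift_down m v" using v by (simp add: merge_class_def)
  consider "middle_block m w" | "\<not> middle_block m w" "is_twin m l w" | "\<not> middle_block m w" "\<not> is_twin m l w"
    by blast
  then show ?thesis
  proof cases
    case 1
    then show ?thesis using shift_down_inj ml len v eq merge_v by (simp add: merge_class_def)
  next
    case 2
    then have "shift_down m v = twin m l 0" using eq merge_v by (simp add: merge_class_def)
    moreover have "0 < m" using 2 by (auto simp: is_twin_def)
    ultimately have "m \<in> support (shift_down m v)" using ml by (simp add: support_twin)
    then show ?thesis using low by auto
  next
    case 3
    then have "support w \<subseteq> {..<m}" using eq merge_v low by (simp add: merge_class_def)
    moreover have "support v \<subseteq> {m..<2 * m}" using v unfolding middle_block_def by simp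
    moreover have "{m..<2 * m} \<inter> {..<m} = {}" by auto
    ultimately show ?thesis using meet by blast
  qed
qed

lemma merge_class_eq_imp_eq_twin:
  assumes ml: "2 * m \<le> l" and len: "length v = l" "length w = l"
    and v: "is_twin m l v" "\<not> middle_block m v" and w: "\<not> middle_block m w"
    and eq: "merge_class m l v = merge_class m l w" and meet: "support v \<inter> support w \<noteq> {}"
  shows "v = w"
proof -
  obtain i where i: "1 \<le> i" "i < m" "v = twin m l i" using v(1) by (auto simp: is_twin_def)
  show ?thesis
  proof (cases "is_twin m l w")
    case True
    then obtain i' where i': "i' < m" "w = twin m l i'" by (auto simp: is_twin_def)
    then have "{i, m + i} \<inter> {i', m + i'} \<noteq> {}" using i meet ml by (simp add: support_twin)
    then have "i = i'" using i i' by auto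
    then show ?thesis using i i' by simp
  next
    case False
    then have "w = twin m l 0" using v w eq by (simp add: merge_class_def)
    then have "{i, m + i} \<inter> {0, m} \<noteq> {}" using i meet ml by (simp add: support_twin)
    then show ?thesis using i by auto
  qed
qed

lemma merge_class_eq_imp_eq:
  assumes "2 * m \<le> l" "length v = l" "length w = l"
    and eq: "merge_class m l v = merge_class m l w" and "support v \<inter> support w \<noteq> {}"
  shows "v = w"
proof -
  have sym: "support w \<inter> support v \<noteq> {}" using assms(5) by blast
  consider "middle_block m v" | "middle_block m w"
    | "\<not> middle_block m v" "\<not> middle_block m w" "is_twin m l v"
    | "\<not> middle_block m v" "\<not> middle_block m w" "is_twin m l w"
    | "\<not> middle_block m v" "\<not> middle_block m w" "\<not> is_twin m l v" "\<not> is_twin m l w"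
    by blast
  then show ?thesis
  proof cases
    case 1 then show ?thesis using merge_class_eq_imp_eq_middle assms by blast
  next
    case 2 then show ?thesis using merge_class_eq_imp_eq_middle assms sym eq[symmetric] by metis
  next
    case 3 then show ?thesis using merge_class_eq_imp_eq_twin assms by blast
  next
    case 4 then show ?thesis using merge_class_eq_imp_eq_twin assms sym eq[symmetric] by metis
  next
    case 5 then show ?thesis using eq by (simp add: merge_class_def)
  qed
qed

lemma merge_class_mem:
  assumes ml: "2 * m \<le> l" and d: "1 < d" and v: "v \<in> bc_hosts l d" "support v \<noteq> {}"
  shows "merge_class m l v \<in> {w \<in> bc_hosts l d. support w \<noteq> {} \<and> \<not> middle_block m w \<and> \<not> is_twin m l w}"
proof -
  have len: "length v = l" using v by (simp add: mem_bc_hosts_iff)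
  have twin_support: "\<exists>i. 1 \<le> i \<and> i < m \<and> support w = {i, m + i}" if "is_twin m l w" for w
    using that ml by (auto simp: is_twin_def support_twin)
  consider "middle_block m v" | "\<not> middle_block m v" "is_twin m l v" | "\<not> middle_block m v" "\<not> is_twin m l v"
    by blast
  then show ?thesis
  proof cases
    case 1
    let ?w = "shift_down m v"
    have low: "p < m" if "p \<in> support ?w" for p
      using that ml len by (simp add: support_shift_down)
    obtain q where "q \<in> support v" "m \<le> q" "q < 2 * m"
      using 1 unfolding middle_block_def by (metis atLeastLessThan_iff ex_in_conv subsetD)
    then have "q - m \<in> support ?w" using ml len by (simp add: support_shift_down)
    moreover have "q - m \<notin> {m..<2 * m}" using low[OF calculation] by simp
    ultimately have "support ?w \<noteq> {}" "\<not> middle_block m ?w" unfolding middle_block_def by blast+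
    moreover have "?w ! p < d" if "p < l" for p
      using that v ml len d by (simp add: nth_shift_down mem_bc_hosts_iff)
    then have "?w \<in> bc_hosts l d" using len by (simp add: mem_bc_hosts_iff)
    moreover have "\<not> is_twin m l ?w" using twin_support low by fastforce
    ultimately show ?thesis using 1 by (simp add: merge_class_def)
  next
    case 2
    then have "0 < m" by (auto simp: is_twin_def)
    then have supp: "support (twin m l 0) = {0, m}" using ml by (simp add: support_twin)
    then have "\<not> middle_block m (twin m l 0)" using \<open>0 < m\<close> by (auto simp: middle_block_def)
    moreover have "\<not> is_twin m l (twin m l 0)" using twin_support supp by (force simp: doubleton_eq_iff)
    ultimately show ?thesis using 2 supp d by (simp add: merge_class_def twin_in_bc_hosts)
  next
    case 3
    then show ?thesis using v by (simp add: merge_class_def)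
  qed
qed

lemma card_middle_block_ge:
  assumes ml: "2 * m \<le> l" and d: "0 < d"
  shows "d ^ m - 1 \<le> card {v \<in> bc_hosts l d. support v \<noteq> {} \<and> middle_block m v}"
proof -
  let ?A = "{a \<in> bc_hosts m d. support a \<noteq> {}}"
  have sub: "shift_up m l ` ?A \<subseteq> {v \<in> bc_hosts l d. support v \<noteq> {} \<and> middle_block m v}"
  proof (intro image_subsetI CollectI conjI)
    fix a assume a: "a \<in> ?A"
    then have la: "length a = m" by (simp add: mem_bc_hosts_iff)
    have "support (shift_up m l a) = (\<lambda>p. m + p) ` support a"
      using ml la by (rule support_shift_up)
    moreover have "support a \<subseteq> {..<m}" using la by (auto simp: support_def)
    ultimately show "support (shift_up m l a) \<noteq> {}" "middle_block m (shift_up m l a)"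
      using a unfolding middle_block_def by auto
    show "shift_up m l a \<in> bc_hosts l d"
      using a d by (auto simp: mem_bc_hosts_iff nth_shift_up)
  qed
  moreover have inj: "inj_on (shift_up m l) ?A"
  proof (rule inj_onI)
    fix a b assume "a \<in> ?A" "b \<in> ?A" and eq: "shift_up m l a = shift_up m l b"
    then have len: "length a = m" "length b = m" by (auto simp: mem_bc_hosts_iff)
    have "a ! q = b ! q" if "q < m" for q
      using arg_cong[OF eq, of "\<lambda>v. v ! (m + q)"] that ml by (simp add: nth_shift_up)
    then show "a = b" using len by (simp add: list_eq_iff_nth_eq)
  qed
  have "card ?A \<le> card {v \<in> bc_hosts l d. support v \<noteq> {} \<and> middle_block m v}"
    using card_inj_on_le[OF inj sub] finite_bc_hosts by simp
  then show ?thesis using d by (simp add: card_nonzero_vecs)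
qed

lemma card_twin_ge:
  assumes ml: "2 * m \<le> l" and d: "1 < d"
  shows "m - 1 \<le> card {v \<in> bc_hosts l d. support v \<noteq> {} \<and> is_twin m l v}"
proof -
  have sub: "twin m l ` {1..<m} \<subseteq> {v \<in> bc_hosts l d. support v \<noteq> {} \<and> is_twin m l v}"
    using ml d by (auto simp: support_twin twin_in_bc_hosts is_twin_def)
  have inj: "inj_on (twin m l) {1..<m}"
  proof (rule inj_onI)
    fix i i' assume "i \<in> {1..<m}" "i' \<in> {1..<m}" "twin m l i = twin m l i'"
    then have "{i, m + i} = {i', m + i'}" using ml by (metis atLeastLessThan_iff support_twin)
    then show "i = i'" by (auto simp: doubleton_eq_iff)
  qed
  show ?thesis
    using card_inj_on_le[OF inj sub] finite_bc_hosts by simp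
qed

lemma card_merge_class_image:
  assumes ml: "2 * m \<le> l" and d: "1 < d"
  shows "card (merge_class m l ` {v \<in> bc_hosts l d. support v \<noteq> {}}) \<le> d ^ l - 1 - (d ^ m - 1) - (m - 1)"
proof -
  define V where "V = {v \<in> bc_hosts l d. support v \<noteq> {}}"
  define M where "M = {v \<in> V. middle_block m v}"
  define T where "T = {v \<in> V. is_twin m l v}"
  have fin: "finite V" unfolding V_def by (simp add: finite_bc_hosts)
  have "M \<inter> T = {}"
    using ml by (auto simp: M_def T_def is_twin_def middle_block_def support_twin)
  then have card_MT: "card (M \<union> T) = card M + card T"
    using fin by (intro card_Un_disjoint) (auto simp: M_def T_def)
  have "merge_class m l ` V \<subseteq> V - (M \<union> T)"
    using merge_class_mem[OF ml d] unfolding V_def M_def T_def by blast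
  then have "card (merge_class m l ` V) \<le> card (V - (M \<union> T))"
    using fin by (intro card_mono) auto
  also have "\<dots> = card V - card M - card T"
    using fin card_MT by (subst card_Diff_subset) (auto simp: M_def T_def)
  also have "\<dots> \<le> d ^ l - 1 - (d ^ m - 1) - (m - 1)"
    using card_nonzero_vecs[of d l] card_middle_block_ge[OF ml, of d] card_twin_ge[OF ml d] d
    unfolding V_def M_def T_def by simp
  finally show ?thesis unfolding V_def .
qed

lemma colourable_upper_bound:
  assumes "2 * m \<le> l" "1 < d"
  shows "colourable l d dim_order_routing (d ^ l - 1 - (d ^ m - 1) - (m - 1))"
proof (rule colourable_mono[OF colourable_dim_order_routing card_merge_class_image[OF assms]])
  fix v w assume "v \<in> {v \<in> bc_hosts l d. support v \<noteq> {}}" "w \<in> {v \<in> bc_hosts l d. support v \<noteq> {}}"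
    "merge_class m l v = merge_class m l w" "support v \<inter> support w \<noteq> {}"
  then show "v = w" using merge_class_eq_imp_eq assms(1) by (auto simp: mem_bc_hosts_iff)
qed

lemma optical_index_bounds:
  assumes "1 \<le> l" "2 \<le> d"
  shows "d ^ l - d ^ (l - 1) \<le> optical_index l d"
    and "optical_index l d \<le> d ^ l - 1 - (d ^ (l div 2) - 1) - (l div 2 - 1)"
proof -
  show "d ^ l - d ^ (l - 1) \<le> optical_index l d"
    using is_routing_dim_order_routing colourable_lower_bound[OF assms(1)] by (rule le_optical_index)
  have "colourable l d dim_order_routing (d ^ l - 1 - (d ^ (l div 2) - 1) - (l div 2 - 1))"
    using assms(2) by (intro colourable_upper_bound) simp_all
  then show "optical_index l d \<le> d ^ l - 1 - (d ^ (l div 2) - 1) - (l div 2 - 1)"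
    by (rule optical_index_le_colourable[OF is_routing_dim_order_routing])
qed

theorem theorem2:
  fixes d :: nat
  assumes "d \<ge> 2"
  shows "optical_index 1 d = d - 1 \<and>
         optical_index 2 d = d ^ 2 - d \<and>
         (\<forall>l::nat. l \<ge> 3 \<longrightarrow>
           d ^ l - d ^ (l - 1) \<le> optical_index l d \<and>
           optical_index l d \<le> d ^ l - d ^ (l div 2) - (l div 2 - 1))"
proof (intro conjI allI impI)
  show "optical_index 1 d = d - 1"
    using optical_index_bounds[of 1 d] assms by simp
  have "d ^ 2 - 1 - (d - 1) = d ^ 2 - d" "d ^ 2 - d ^ 1 = d ^ 2 - d"
    using assms by (simp_all add: power2_eq_square)
  then show "optical_index 2 d = d ^ 2 - d"
    using optical_index_bounds[of 2 d] assms by simp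
next
  fix l :: nat assume "l \<ge> 3"
  then show "d ^ l - d ^ (l - 1) \<le> optical_index l d"
    using optical_index_bounds(1) assms by simp
  have "d ^ l - 1 - (d ^ (l div 2) - 1) = d ^ l - d ^ (l div 2)"
    using assms by (simp add: Nat.diff_diff_right one_le_power)
  moreover have "optical_index l d \<le> d ^ l - 1 - (d ^ (l div 2) - 1) - (l div 2 - 1)"
    using assms \<open>l \<ge> 3\<close> by (intro optical_index_bounds(2)) simp_all
  ultimately show "optical_index l d \<le> d ^ l - d ^ (l div 2) - (l div 2 - 1)"
    by simp
qed

end
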